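(* A parking function $(T,p)$ on a rooted tree $T$ with vertex set $[n]$ is prime if and only if every edge of $T$ is used by $p$.
   Context: $T$ is a rooted tree on vertex set $[n]$ with edges oriented towards the root. For $p\in[n]^n$, drivers $1,\dots,n$ arrive in order; driver $i$ parks at $p_i$ if unoccupied, otherwise follows the directed path towards the root and parks at the first unoccupied vertex, leaving if none exists. $(T,p)$ is a parking function if all drivers park. $T_v$ denotes the set of vertices $w$ with a directed path from $w$ to $v$ (including $v$). A parking function is prime if $|T_v|<|\{i:p_i\in T_v\}|$ for every non-root vertex $v$. An edge is used by $p$ if some driver, after failing to park at her preferred vertex, crosses it during her search for an unoccupied vertex. *)

theory Defs
  imports Main
begin

text \<open>A rooted tree on vertex set [n] = {1..n} with edges oriented towards the root
  is given by its root r and a parent function par: every non-root vertex v has the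
  unique outgoing edge v \<rightarrow> par v.  The value par r is irrelevant.\<close>

definition rooted_tree :: "nat \<Rightarrow> (nat \<Rightarrow> nat) \<Rightarrow> nat \<Rightarrow> bool" where
  "rooted_tree n par r \<longleftrightarrow> r \<in> {1..n} \<and>
     (\<forall>v\<in>{1..n} - {r}. par v \<in> {1..n}) \<and>
     (\<forall>v\<in>{1..n}. \<exists>k. (par ^^ k) v = r)"

definition dist :: "(nat \<Rightarrow> nat) \<Rightarrow> nat \<Rightarrow> nat \<Rightarrow> nat" where
  "dist par r x = (LEAST k. (par ^^ k) x = r)"

text \<open>There is a directed path from w to v (possibly of length 0); paths cannot leave the root.\<close>
definition reaches :: "(nat \<Rightarrow> nat) \<Rightarrow> nat \<Rightarrow> nat \<Rightarrow> nat \<Rightarrow> bool" where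
  "reaches par r w v \<longleftrightarrow> (\<exists>k. (par ^^ k) w = v \<and> (\<forall>j<k. (par ^^ j) w \<noteq> r))"

definition subtree :: "nat \<Rightarrow> (nat \<Rightarrow> nat) \<Rightarrow> nat \<Rightarrow> nat \<Rightarrow> nat set" where
  "subtree n par r v = {w \<in> {1..n}. reaches par r w v}"

definition finds_spot :: "(nat \<Rightarrow> nat) \<Rightarrow> nat \<Rightarrow> nat set \<Rightarrow> nat \<Rightarrow> bool" where
  "finds_spot par r occ x \<longleftrightarrow> (\<exists>j \<le> dist par r x. (par ^^ j) x \<notin> occ)"

text \<open>Number of edges crossed by the driver preferring x: up to the first free vertex,
  or all the way to the root if she leaves.\<close>
definition search_len :: "(nat \<Rightarrow> nat) \<Rightarrow> nat \<Rightarrow> nat set \<Rightarrow> nat \<Rightarrow> nat" where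
  "search_len par r occ x =
     (if finds_spot par r occ x then (LEAST j. j \<le> dist par r x \<and> (par ^^ j) x \<notin> occ)
      else dist par r x)"

definition park_step :: "(nat \<Rightarrow> nat) \<Rightarrow> nat \<Rightarrow> nat set \<Rightarrow> nat \<Rightarrow> nat set" where
  "park_step par r occ x =
     (if finds_spot par r occ x then insert ((par ^^ search_len par r occ x) x) occ else occ)"

primrec occupied :: "(nat \<Rightarrow> nat) \<Rightarrow> nat \<Rightarrow> (nat \<Rightarrow> nat) \<Rightarrow> nat \<Rightarrow> nat set" where
  "occupied par r p 0 = {}"
| "occupied par r p (Suc i) = park_step par r (occupied par r p i) (p (Suc i))"

definition parking_function :: "nat \<Rightarrow> (nat \<Rightarrow> nat) \<Rightarrow> nat \<Rightarrow> (nat \<Rightarrow> nat) \<Rightarrow> bool" where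
  "parking_function n par r p \<longleftrightarrow>
     (\<forall>i\<in>{1..n}. finds_spot par r (occupied par r p (i - 1)) (p i))"

definition prime_pf :: "nat \<Rightarrow> (nat \<Rightarrow> nat) \<Rightarrow> nat \<Rightarrow> (nat \<Rightarrow> nat) \<Rightarrow> bool" where
  "prime_pf n par r p \<longleftrightarrow> parking_function n par r p \<and>
     (\<forall>v\<in>{1..n} - {r}. card (subtree n par r v) < card {i\<in>{1..n}. p i \<in> subtree n par r v})"

text \<open>The edge v \<rightarrow> par v (v a non-root vertex) is used by p: some driver, having failed
  at her preferred vertex, crosses it (i.e. leaves v towards par v) during her search.\<close>
definition edge_used :: "nat \<Rightarrow> (nat \<Rightarrow> nat) \<Rightarrow> nat \<Rightarrow> (nat \<Rightarrow> nat) \<Rightarrow> nat \<Rightarrow> bool" where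
  "edge_used n par r p v \<longleftrightarrow>
     (\<exists>i\<in>{1..n}. p i \<in> occupied par r p (i - 1) \<and>
        (\<exists>j < search_len par r (occupied par r p (i - 1)) (p i). (par ^^ j) (p i) = v))"

end

theory Submission
  imports Defs
begin

text \<open>Drivers park at distinct vertices, so once all of them have parked every vertex of
  \<open>T\<^sub>v\<close> is filled, and it is filled by a driver preferring a vertex of \<open>T\<^sub>v\<close>, because the
  search path of a driver only enters \<open>T\<^sub>v\<close> if it starts there.  Hence the drivers
  preferring \<open>T\<^sub>v\<close> outnumber the vertices of \<open>T\<^sub>v\<close> exactly when one of them parks outside
  \<open>T\<^sub>v\<close>.  Since the path from a vertex to the root visits \<open>v\<close> at most once, a driver starting
  in \<open>T\<^sub>v\<close> ends up outside \<open>T\<^sub>v\<close> exactly when she crosses the edge \<open>v \<rightarrow> par v\<close>.\<close>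

lemma funpow_add_apply: "(f ^^ (m + n)) x = (f ^^ m) ((f ^^ n) x)"
  by (simp add: funpow_add)

lemma card_less_iff_image_not_subset:
  assumes "finite A" "inj_on f A" "B \<subseteq> f ` A"
  shows "card B < card A \<longleftrightarrow> (\<exists>a\<in>A. f a \<notin> B)"
proof -
  have "card A = card (f ` A)"
    using assms(2) by (simp add: card_image)
  moreover have "card B < card (f ` A) \<longleftrightarrow> B \<noteq> f ` A"
    using assms(1,3) card_seteq[of "f ` A" B] psubset_card_mono[of "f ` A" B] by auto
  ultimately show ?thesis
    using assms(3) by auto
qed

lemma reaches_trans:
  assumes "reaches par r u v" "reaches par r v w"
  shows "reaches par r u w"
proof -
  obtain a where a: "(par ^^ a) u = v" "\<forall>j<a. (par ^^ j) u \<noteq> r"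
    using assms(1) unfolding reaches_def by blast
  obtain b where b: "(par ^^ b) v = w" "\<forall>j<b. (par ^^ j) v \<noteq> r"
    using assms(2) unfolding reaches_def by blast
  have "(par ^^ j) u \<noteq> r" if "j < b + a" for j
  proof (cases "j < a")
    case False
    then have "(par ^^ j) u = (par ^^ (j - a)) v"
      using a(1) funpow_add_apply[of "j - a" a par u] by simp
    then show ?thesis
      using b(2) that False by simp
  qed (use a(2) in simp)
  moreover have "(par ^^ (b + a)) u = w"
    using a(1) b(1) by (simp add: funpow_add_apply)
  ultimately show ?thesis
    unfolding reaches_def by blast
qed

lemma not_root_before_dist: "j < dist par r x \<Longrightarrow> (par ^^ j) x \<noteq> r"
  unfolding dist_def by (rule not_less_Least)

lemma not_root_below: "k \<le> dist par r x \<Longrightarrow> \<forall>j<k. (par ^^ j) x \<noteq> r"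
  using not_root_before_dist less_le_trans by blast

lemma reaches_funpow: "k \<le> dist par r x \<Longrightarrow> reaches par r x ((par ^^ k) x)"
  unfolding reaches_def using not_root_below by blast

lemma search_len_spec:
  assumes "finds_spot par r occ x"
  shows "search_len par r occ x \<le> dist par r x"
    and "(par ^^ search_len par r occ x) x \<notin> occ"
    and "j < search_len par r occ x \<Longrightarrow> (par ^^ j) x \<in> occ"
proof -
  have sl: "search_len par r occ x = (LEAST j. j \<le> dist par r x \<and> (par ^^ j) x \<notin> occ)"
    using assms unfolding search_len_def by simp
  have "\<exists>j. j \<le> dist par r x \<and> (par ^^ j) x \<notin> occ"
    using assms unfolding finds_spot_def by blast
  then have "search_len par r occ x \<le> dist par r x \<and> (par ^^ search_len par r occ x) x \<notin> occ"
    unfolding sl by (rule LeastI_ex)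
  then show le: "search_len par r occ x \<le> dist par r x"
    and "(par ^^ search_len par r occ x) x \<notin> occ"
    by simp_all
  show "(par ^^ j) x \<in> occ" if "j < search_len par r occ x"
    using not_less_Least[OF that[unfolded sl]] that le by auto
qed

definition parking_spot :: "(nat \<Rightarrow> nat) \<Rightarrow> nat \<Rightarrow> (nat \<Rightarrow> nat) \<Rightarrow> nat \<Rightarrow> nat" where
  "parking_spot par r p i = (par ^^ search_len par r (occupied par r p (i - 1)) (p i)) (p i)"

context
  fixes n r :: nat and par :: "nat \<Rightarrow> nat"
  assumes tree: "rooted_tree n par r"
begin

lemma funpow_dist_eq_root: "x \<in> {1..n} \<Longrightarrow> (par ^^ dist par r x) x = r"
  using tree unfolding rooted_tree_def dist_def by (meson LeastI)

lemma funpow_mem_vertices: "x \<in> {1..n} \<Longrightarrow> j \<le> dist par r x \<Longrightarrow> (par ^^ j) x \<in> {1..n}"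
proof (induction j)
  case (Suc j)
  then have "(par ^^ j) x \<in> {1..n} - {r}"
    using not_root_before_dist[of j par r x] by simp
  then show ?case
    using tree unfolding rooted_tree_def by simp
qed simp

lemma cycle_meets_root:
  assumes "v \<in> {1..n}" "(par ^^ L) v = v" "0 < L"
  shows "\<exists>i<L. (par ^^ i) v = r"
proof -
  have "(par ^^ (dist par r v mod L)) v = r"
    using funpow_mod_eq[where f=par and n=L and x=v] assms funpow_dist_eq_root by simp
  then show ?thesis
    using assms(3) by (meson mod_less_divisor)
qed

text \<open>A vertex on the path from \<open>x\<close> to the root reaches \<open>v\<close> only if it comes no later than
  \<open>v\<close>: otherwise the path would continue from \<open>v\<close> back to \<open>v\<close> without passing the root.\<close>

lemma reaches_from_path_iff:
  assumes x: "x \<in> {1..n}" and j: "j \<le> dist par r x"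
    and k: "(par ^^ k) x = v" "\<forall>i<k. (par ^^ i) x \<noteq> r"
  shows "reaches par r ((par ^^ j) x) v \<longleftrightarrow> j \<le> k"
proof
  assume "j \<le> k"
  then have "(par ^^ (k - j)) ((par ^^ j) x) = v"
    using k(1) funpow_add_apply[of "k - j" j par x] by simp
  moreover have "(par ^^ i) ((par ^^ j) x) \<noteq> r" if "i < k - j" for i
  proof -
    have "i + j < k"
      using that by simp
    then show ?thesis
      using k(2) funpow_add_apply[of i j par x] by auto
  qed
  ultimately show "reaches par r ((par ^^ j) x) v"
    unfolding reaches_def by blast
next
  assume "reaches par r ((par ^^ j) x) v"
  then obtain m where m: "(par ^^ m) ((par ^^ j) x) = v"
    "\<forall>i<m. (par ^^ i) ((par ^^ j) x) \<noteq> r"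
    unfolding reaches_def by blast
  show "j \<le> k"
  proof (rule ccontr)
    assume "\<not> j \<le> k"
    define L where "L = m + j - k"
    have L: "0 < L" "L + k = m + j"
      using \<open>\<not> j \<le> k\<close> by (simp_all add: L_def)
    have iterate: "(par ^^ i) v = (par ^^ (i + k)) x" for i
      using k(1) funpow_add_apply[of i k par x] by simp
    have "v \<in> {1..n}"
      using funpow_mem_vertices[OF x, of k] \<open>\<not> j \<le> k\<close> j k(1) by simp
    moreover have "(par ^^ L) v = v"
      using iterate[of L] L(2) m(1) funpow_add_apply[of m j par x] by simp
    ultimately obtain i where i: "i < L" "(par ^^ i) v = r"
      using cycle_meets_root L(1) by blast
    show False
    proof (cases "i + k < j")
      case True
      then show False
        using i(2) iterate[of i] not_root_before_dist[of "i + k" par r x] j by simp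
    next
      case False
      then have "(par ^^ i) v = (par ^^ (i + k - j)) ((par ^^ j) x)"
        using iterate[of i] funpow_add_apply[of "i + k - j" j par x] by simp
      moreover have "i + k - j < m"
        using i(1) L(2) False by simp
      ultimately show False
        using m(2) i(2) by metis
    qed
  qed
qed

context
  fixes p :: "nat \<Rightarrow> nat"
  assumes pref: "\<forall>i\<in>{1..n}. p i \<in> {1..n}"
    and pf: "parking_function n par r p"
begin

lemma finds_spot_driver: "i \<in> {1..n} \<Longrightarrow> finds_spot par r (occupied par r p (i - 1)) (p i)"
  using pf unfolding parking_function_def by blast

lemmas driver_search_len = search_len_spec[OF finds_spot_driver]

lemma occupied_eq_parking_spots: "i \<le> n \<Longrightarrow> occupied par r p i = parking_spot par r p ` {1..i}"
proof (induction i)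
  case (Suc i)
  have "{1..Suc i} = insert (Suc i) {1..i}"
    by auto
  then show ?case
    using Suc finds_spot_driver[of "Suc i"] by (simp add: park_step_def parking_spot_def)
qed simp

lemma parking_spot_mem_vertices: "i \<in> {1..n} \<Longrightarrow> parking_spot par r p i \<in> {1..n}"
  using driver_search_len(1) funpow_mem_vertices pref unfolding parking_spot_def by blast

lemma inj_on_parking_spot: "inj_on (parking_spot par r p) {1..n}"
proof -
  have "parking_spot par r p i \<noteq> parking_spot par r p i'"
    if "i < i'" "i \<in> {1..n}" "i' \<in> {1..n}" for i i'
  proof -
    have "parking_spot par r p i \<in> occupied par r p (i' - 1)"
      using occupied_eq_parking_spots[of "i' - 1"] that by auto
    then show ?thesis
      using driver_search_len(2)[OF that(3)] unfolding parking_spot_def by auto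
  qed
  then show ?thesis
    by (intro inj_onI) (metis linorder_cases)
qed

lemma parking_spots_eq_vertices: "parking_spot par r p ` {1..n} = {1..n}"
  using inj_on_parking_spot parking_spot_mem_vertices
  by (intro card_subset_eq) (auto simp: card_image)

lemma reaches_parking_spot: "i \<in> {1..n} \<Longrightarrow> reaches par r (p i) (parking_spot par r p i)"
  unfolding parking_spot_def using driver_search_len(1) by (rule reaches_funpow)

lemma parking_spot_mem_subtree_iff:
  assumes "i \<in> {1..n}" "(par ^^ k) (p i) = v" "\<forall>j<k. (par ^^ j) (p i) \<noteq> r"
  shows "parking_spot par r p i \<in> subtree n par r v \<longleftrightarrow>
           search_len par r (occupied par r p (i - 1)) (p i) \<le> k"
  using parking_spot_mem_vertices[OF assms(1)]
    reaches_from_path_iff[OF _ driver_search_len(1)[OF assms(1)] assms(2,3)] assms(1) pref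
  unfolding subtree_def parking_spot_def by auto

lemma edge_used_iff_parks_outside_subtree:
  "edge_used n par r p v \<longleftrightarrow>
     (\<exists>i\<in>{1..n}. p i \<in> subtree n par r v \<and> parking_spot par r p i \<notin> subtree n par r v)"
proof
  assume "edge_used n par r p v"
  then obtain i j where i: "i \<in> {1..n}"
    and j: "j < search_len par r (occupied par r p (i - 1)) (p i)" "(par ^^ j) (p i) = v"
    unfolding edge_used_def by blast
  have before_root: "\<forall>j'<j. (par ^^ j') (p i) \<noteq> r"
    using j(1) driver_search_len(1)[OF i] by (simp add: not_root_below)
  then have "p i \<in> subtree n par r v"
    using i j(2) pref unfolding subtree_def reaches_def by blast
  moreover have "parking_spot par r p i \<notin> subtree n par r v"
    using parking_spot_mem_subtree_iff[OF i j(2) before_root] j(1) by simp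
  ultimately show "\<exists>i\<in>{1..n}. p i \<in> subtree n par r v \<and>
                                parking_spot par r p i \<notin> subtree n par r v"
    using i by blast
next
  assume "\<exists>i\<in>{1..n}. p i \<in> subtree n par r v \<and> parking_spot par r p i \<notin> subtree n par r v"
  then obtain i k where i: "i \<in> {1..n}" "parking_spot par r p i \<notin> subtree n par r v"
    and k: "(par ^^ k) (p i) = v" "\<forall>j<k. (par ^^ j) (p i) \<noteq> r"
    unfolding subtree_def reaches_def by blast
  have crossed: "k < search_len par r (occupied par r p (i - 1)) (p i)"
    using parking_spot_mem_subtree_iff[OF i(1) k] i(2) by simp
  then have "p i \<in> occupied par r p (i - 1)"
    using driver_search_len(3)[OF i(1), of 0] by simp
  then show "edge_used n par r p v"
    unfolding edge_used_def using i(1) crossed k(1) by blast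
qed

lemma subtree_subset_parking_spots:
  "subtree n par r v \<subseteq> parking_spot par r p ` {i\<in>{1..n}. p i \<in> subtree n par r v}"
proof
  fix w assume w: "w \<in> subtree n par r v"
  then obtain i where i: "i \<in> {1..n}" "w = parking_spot par r p i"
    using parking_spots_eq_vertices unfolding subtree_def by blast
  then have "reaches par r (p i) v"
    using reaches_trans reaches_parking_spot w unfolding subtree_def by blast
  then show "w \<in> parking_spot par r p ` {i\<in>{1..n}. p i \<in> subtree n par r v}"
    using i pref unfolding subtree_def by auto
qed

end

end

theorem corollary2p5:
  fixes n r :: nat and par p :: "nat \<Rightarrow> nat"
  assumes "rooted_tree n par r"
    and "\<forall>i\<in>{1..n}. p i \<in> {1..n}"
    and "parking_function n par r p"
  shows "prime_pf n par r p \<longleftrightarrow> (\<forall>v\<in>{1..n} - {r}. edge_used n par r p v)"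
proof -
  have "card (subtree n par r v) < card {i\<in>{1..n}. p i \<in> subtree n par r v}
          \<longleftrightarrow> edge_used n par r p v" for v
  proof -
    have "card (subtree n par r v) < card {i\<in>{1..n}. p i \<in> subtree n par r v}
            \<longleftrightarrow> (\<exists>i\<in>{i\<in>{1..n}. p i \<in> subtree n par r v}.
                   parking_spot par r p i \<notin> subtree n par r v)"
      by (intro card_less_iff_image_not_subset subtree_subset_parking_spots[OF assms]
          inj_on_subset[OF inj_on_parking_spot[OF assms]]) auto
    then show ?thesis
      using edge_used_iff_parks_outside_subtree[OF assms] by auto
  qed
  then show ?thesis
    using assms(3) unfolding prime_pf_def by blast
qed

end
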